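(* Let $n\geq2$ be an integer, and let $f:[0,\infty)\to[0,\infty)$ be a continuous, log-concave function, $C^2$-smooth on $(0,\infty)$, with $0<\int_0^\infty f<\infty$. Then for $0\leq\varepsilon\leq1$, $$ \int_{t_n(f)(1-\varepsilon)}^{t_n(f)(1+\varepsilon)}t^{n-1}f(t)\,dt\geq\left(1-Ce^{-c\varepsilon^2n}\right)\int_0^\infty t^{n-1}f(t)\,dt, $$ where $C>1$ and $0<c<1$ are universal constants.
   Context: For such $f$ and $p>1$, $t_p(f)$ denotes the unique $t>0$ with $f(t)>0$ and $f'(t)/f(t)=-(p-1)/t$ (existence and uniqueness hold under the stated assumptions). Log-concave: $f(\lambda x+(1-\lambda)y)\geq f(x)^\lambda f(y)^{1-\lambda}$. *)

theory Defs
  imports "HOL-Analysis.Analysis"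
begin

definition log_concave_on_nonneg :: "(real \<Rightarrow> real) \<Rightarrow> bool" where
  "log_concave_on_nonneg f \<longleftrightarrow>
     (\<forall>x\<ge>0. \<forall>y\<ge>0. \<forall>l\<in>{0..1::real}.
        f (l * x + (1 - l) * y) \<ge> (f x powr l) * (f y powr (1 - l)))"

definition C2_on_pos :: "(real \<Rightarrow> real) \<Rightarrow> bool" where
  "C2_on_pos f \<longleftrightarrow>
     (\<forall>t>0. f differentiable (at t) \<and> (deriv f) differentiable (at t)) \<and>
     continuous_on {0<..} (deriv (deriv f))"

definition tp :: "real \<Rightarrow> (real \<Rightarrow> real) \<Rightarrow> real" where
  "tp p f = (THE t. t > 0 \<and> f t > 0 \<and> deriv f t / f t = - (p - 1) / t)"

end

theory Submission
  imports Defs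
begin

(* Put m = n - 1 and h(t) = t^m f(t). Combining the tangent bound for the concave function ln f
   with t^m <= s^m exp(m (t - s) / s) gives h(t) <= h(s) exp(phi(s) (t - s)), where
   phi(s) = m/s + f'(s)/f(s) is decreasing and vanishes at the critical point t0 = t_n(f).
   Hence h is unimodal with mode t0, and at s = t0 (1 +- eps/2) the slope phi(s) has size at least
   m eps / (3 t0). Beyond t0 (1 +- eps) the function h is therefore dominated by an exponential,
   so each tail of the integral of h is at most (6 / (m eps^2)) exp(-m eps^2 / 6) times
   (t0 eps / 2) h(s), which by unimodality is at most the mass of h on [t0 (1 - eps), t0 (1 + eps)].
   The critical point exists because h tends to 0 at infinity (f decays exponentially), so h
   attains its maximum on [0, infinity). As n <= 2m, the resulting bound 1 - exp(-m eps^2 / 6),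
   valid for m eps^2 >= 12, yields C = 3 and c = 1/24; for m eps^2 < 12 the claim is trivial. *)

lemma log_concave_pos_between:
  assumes lc: "log_concave_on_nonneg f" and "0 \<le> a" "a \<le> b" "b \<le> c" "0 < f a" "0 < f c"
  shows "0 < f b"
proof (cases "a = c")
  case True
  then show ?thesis using assms by auto
next
  case False
  define l where "l = (c - b) / (c - a)"
  have ca: "0 < c - a" using False assms by auto
  have l: "l \<in> {0..1}" using assms ca by (auto simp: l_def field_simps)
  have "1 - l = (b - a) / (c - a)" using ca by (simp add: l_def field_simps)
  then have "l * a + (1 - l) * c = ((c - b) * a + (b - a) * c) / (c - a)"
    by (simp add: l_def add_divide_distrib)
  also have "(c - b) * a + (b - a) * c = b * (c - a)" by algebra
  finally have b: "l * a + (1 - l) * c = b" using ca by simp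
  have "0 < f a powr l * f c powr (1 - l)" using assms by simp
  also have "\<dots> \<le> f b"
    using lc l assms unfolding log_concave_on_nonneg_def b[symmetric] by auto
  finally show ?thesis .
qed

lemma log_concave_imp_convex_neg_ln:
  assumes lc: "log_concave_on_nonneg f"
  shows "convex_on {t. 0 \<le> t \<and> 0 < f t} (\<lambda>t. - ln (f t))"
proof -
  let ?P = "{t. 0 \<le> t \<and> 0 < f t}"
  have key: "f x powr u * f y powr v \<le> f (u * x + v * y)"
    if "x \<in> ?P" "y \<in> ?P" "0 \<le> u" "0 \<le> v" "u + v = 1" for x y u v
  proof -
    have "u \<in> {0..1}" "v = 1 - u"
      using that by auto
    moreover have "f x powr u * f y powr (1 - u) \<le> f (u * x + (1 - u) * y)"
      using lc that \<open>u \<in> {0..1}\<close> unfolding log_concave_on_nonneg_def by auto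
    ultimately show ?thesis
      by simp
  qed
  have key_pos: "0 < f (u * x + v * y)"
    if "x \<in> ?P" "y \<in> ?P" "0 \<le> u" "0 \<le> v" "u + v = 1" for x y u v
  proof -
    have "0 < f x powr u * f y powr v" using that by simp
    then show ?thesis using key[OF that] by linarith
  qed
  have "convex ?P"
    unfolding convex_def using key_pos by simp
  then show ?thesis
    unfolding convex_on_def
  proof (intro conjI ballI allI impI)
    fix x y u v :: real
    assume h: "x \<in> ?P" "y \<in> ?P" "0 \<le> u" "0 \<le> v" "u + v = 1"
    have "u * ln (f x) + v * ln (f y) = ln (f x powr u * f y powr v)"
      using h by (simp add: ln_mult ln_powr)
    also have "\<dots> \<le> ln (f (u * x + v * y))"
      using key[OF h] key_pos[OF h] h by (subst ln_le_cancel_iff) auto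
    finally show "- ln (f (u *\<^sub>R x + v *\<^sub>R y)) \<le> u * - ln (f x) + v * - ln (f y)"
      by simp
  qed
qed

lemma log_concave_ln_le_tangent:
  assumes lc: "log_concave_on_nonneg f" and diff: "\<forall>t>0. f differentiable (at t)"
    and s: "0 < s" "0 < f s" and t: "0 \<le> t" "0 < f t"
  shows "ln (f t) \<le> ln (f s) + deriv f s / f s * (t - s)"
proof -
  let ?P = "{t. 0 \<le> t \<and> 0 < f t}"
  have "continuous_on {0<..} f"
    using diff by (intro continuous_at_imp_continuous_on) (auto intro: differentiable_imp_continuous_within)
  then have "open (f -` {0<..} \<inter> {0<..})"
    by (subst (asm) continuous_on_open_vimage) auto
  moreover have "f -` {0<..} \<inter> {0<..} \<subseteq> ?P" "s \<in> f -` {0<..} \<inter> {0<..}"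
    using s by auto
  ultimately have s_int: "s \<in> interior ?P"
    by (meson interior_maximal interior_open subsetD)
  have "(f has_real_derivative deriv f s) (at s)"
    using diff s by (simp add: DERIV_deriv_iff_real_differentiable)
  then have "((\<lambda>t. - ln (f t)) has_real_derivative - (deriv f s / f s)) (at s)"
    using s by (auto intro!: derivative_eq_intros simp: field_simps)
  then have "((\<lambda>t. - ln (f t)) has_real_derivative - (deriv f s / f s)) (at s within ?P)"
    by (rule has_field_derivative_at_within)
  from convex_on_imp_above_tangent[OF log_concave_imp_convex_neg_ln[OF lc] convex_connected s_int _ this]
  have "- (deriv f s / f s) * (t - s) \<le> - ln (f t) - - ln (f s)"
    using t log_concave_imp_convex_neg_ln[OF lc] by (auto simp: convex_on_def)
  then show ?thesis by simp
qed

lemma log_concave_le_exp_tangent: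
  assumes lc: "log_concave_on_nonneg f" and diff: "\<forall>t>0. f differentiable (at t)"
    and s: "0 < s" "0 < f s" and t: "0 \<le> t" "0 \<le> f t"
  shows "f t \<le> f s * exp (deriv f s / f s * (t - s))"
proof (cases "f t = 0")
  case False
  then have "0 < f t" using t by simp
  then have "f t = exp (ln (f t))" by simp
  also have "\<dots> \<le> exp (ln (f s) + deriv f s / f s * (t - s))"
    using log_concave_ln_le_tangent[OF lc diff s t(1) \<open>0 < f t\<close>] by simp
  also have "\<dots> = f s * exp (deriv f s / f s * (t - s))"
    using s by (simp add: exp_add)
  finally show ?thesis .
qed (use s in simp)

lemma log_concave_deriv_ratio_antimono:
  assumes lc: "log_concave_on_nonneg f" and diff: "\<forall>t>0. f differentiable (at t)"
    and "0 < s" "s \<le> t" "0 < f s" "0 < f t"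
  shows "deriv f t / f t \<le> deriv f s / f s"
proof -
  have "ln (f t) \<le> ln (f s) + deriv f s / f s * (t - s)"
    "ln (f s) \<le> ln (f t) + deriv f t / f t * (s - t)"
    using assms log_concave_ln_le_tangent[OF lc diff, of s t] log_concave_ln_le_tangent[OF lc diff, of t s]
    by auto
  then have "0 \<le> deriv f s / f s * (t - s) + deriv f t / f t * (s - t)"
    by linarith
  also have "\<dots> = (deriv f s / f s - deriv f t / f t) * (t - s)"
    by algebra
  finally show ?thesis
    using assms by (cases "s = t") (auto simp: zero_le_mult_iff)
qed

lemma power_le_exp_tangent:
  fixes s t :: real
  assumes "0 < s" "0 \<le> t"
  shows "t ^ m \<le> s ^ m * exp (real m / s * (t - s))"
proof -
  have "t / s \<le> exp (t / s - 1)"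
    using exp_ge_add_one_self[of "t / s - 1"] by simp
  then have "(t / s) ^ m \<le> exp (t / s - 1) ^ m"
    using assms by (intro power_mono) auto
  also have "\<dots> = exp (real m / s * (t - s))"
    using assms by (simp add: exp_of_nat_mult[symmetric] field_simps)
  finally show ?thesis
    using assms by (simp add: field_simps)
qed

lemma moment_le_exp_tangent:
  assumes lc: "log_concave_on_nonneg f" and diff: "\<forall>t>0. f differentiable (at t)"
    and s: "0 < s" "0 < f s" and t: "0 \<le> t" "0 \<le> f t"
  shows "t ^ m * f t \<le> s ^ m * f s * exp ((real m / s + deriv f s / f s) * (t - s))"
proof -
  have "t ^ m * f t \<le> (s ^ m * exp (real m / s * (t - s))) * (f s * exp (deriv f s / f s * (t - s)))"
    using power_le_exp_tangent[OF s(1) t(1), of m] log_concave_le_exp_tangent[OF lc diff s t] t s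
    by (intro mult_mono) auto
  also have "\<dots> = s ^ m * f s * exp ((real m / s + deriv f s / f s) * (t - s))"
    by (simp add: distrib_right exp_add)
  finally show ?thesis .
qed

lemma set_integral_nonneg_real:
  fixes f :: "_ \<Rightarrow> real"
  assumes "\<And>x. x \<in> A \<Longrightarrow> 0 \<le> f x"
  shows "0 \<le> (LINT x:A|M. f x)"
  unfolding set_lebesgue_integral_def using assms
  by (intro integral_nonneg_AE) (simp split: split_indicator)

lemma set_integral_ge_interval_mult:
  fixes g :: "real \<Rightarrow> real"
  assumes g: "set_integrable lborel S g" and S: "S \<in> sets lborel" "{a..b} \<subseteq> S" and "a \<le> b"
    and nonneg: "\<And>t. t \<in> S \<Longrightarrow> 0 \<le> g t" and lower: "\<And>t. t \<in> {a..b} \<Longrightarrow> k \<le> g t"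
  shows "(b - a) * k \<le> (LINT t:S|lborel. g t)"
proof -
  have g_ab: "set_integrable lborel {a..b} g"
    by (rule set_integrable_subset[OF g]) (use S in auto)
  have "(b - a) * k = integral {a..b} (\<lambda>_. k)"
    using \<open>a \<le> b\<close> by simp
  also have "\<dots> \<le> integral {a..b} g"
    using set_borel_integral_eq_integral(1)[OF g_ab] lower by (intro integral_le) auto
  also have "\<dots> \<le> integral S g"
    using set_borel_integral_eq_integral(1)[OF g_ab] set_borel_integral_eq_integral(1)[OF g] S nonneg
    by (intro integral_subset_le) auto
  also have "\<dots> = (LINT t:S|lborel. g t)"
    using set_borel_integral_eq_integral(2)[OF g] by simp
  finally show ?thesis .
qed

lemma set_integral_le_exp_decay_right:
  fixes g :: "real \<Rightarrow> real"
  assumes g: "set_integrable lborel {a..} g" and "0 < \<alpha>"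
    and le: "\<And>t. a \<le> t \<Longrightarrow> g t \<le> c * exp (- \<alpha> * (t - a))"
  shows "(LINT t:{a..}|lborel. g t) \<le> c / \<alpha>"
proof -
  have exp_int: "((\<lambda>t. c * exp (\<alpha> * a) * exp (- \<alpha> * t)) has_integral c / \<alpha>) {a..}"
    using has_integral_mult_right[OF has_integral_exp_minus_to_infinity[OF \<open>0 < \<alpha>\<close>, of a],
        of "c * exp (\<alpha> * a)"]
    by (simp add: exp_minus field_simps)
  have "(LINT t:{a..}|lborel. g t) = integral {a..} g"
    using set_borel_integral_eq_integral(2)[OF g] .
  also have "\<dots> \<le> integral {a..} (\<lambda>t. c * exp (\<alpha> * a) * exp (- \<alpha> * t))"
    using set_borel_integral_eq_integral(1)[OF g] exp_int le
    by (intro integral_le) (auto simp: integrable_on_def exp_diff exp_minus field_simps)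
  also have "\<dots> = c / \<alpha>"
    using exp_int by (rule integral_unique)
  finally show ?thesis .
qed

lemma set_integral_le_exp_decay_left:
  fixes g :: "real \<Rightarrow> real"
  assumes g: "set_integrable lborel {a..b} g" and "a \<le> b" "0 < \<beta>" "0 \<le> c"
    and le: "\<And>t. a \<le> t \<Longrightarrow> t \<le> b \<Longrightarrow> g t \<le> c * exp (\<beta> * (t - b))"
  shows "(LINT t:{a..b}|lborel. g t) \<le> c / \<beta>"
proof -
  define F where "F t = c * exp (\<beta> * (t - b)) / \<beta>" for t
  have exp_int: "((\<lambda>t. c * exp (\<beta> * (t - b))) has_integral F b - F a) {a..b}"
  proof (rule fundamental_theorem_of_calculus[OF \<open>a \<le> b\<close>])
    fix t
    have "(F has_real_derivative c * exp (\<beta> * (t - b))) (at t)"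
      unfolding F_def using \<open>0 < \<beta>\<close> by (auto intro!: derivative_eq_intros)
    then show "(F has_vector_derivative c * exp (\<beta> * (t - b))) (at t within {a..b})"
      by (simp add: has_real_derivative_iff_has_vector_derivative[symmetric] has_field_derivative_at_within)
  qed
  have "(LINT t:{a..b}|lborel. g t) = integral {a..b} g"
    using set_borel_integral_eq_integral(2)[OF g] .
  also have "\<dots> \<le> integral {a..b} (\<lambda>t. c * exp (\<beta> * (t - b)))"
    using set_borel_integral_eq_integral(1)[OF g] exp_int le
    by (intro integral_le) (auto simp: integrable_on_def)
  also have "\<dots> = F b - F a"
    using exp_int by (rule integral_unique)
  also have "\<dots> \<le> c / \<beta>"
    using \<open>0 < \<beta>\<close> \<open>0 \<le> c\<close> by (simp add: F_def)
  finally show ?thesis .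
qed

lemma set_integral_atLeast_split3:
  fixes g :: "real \<Rightarrow> real"
  assumes int: "set_integrable lborel {a..} g" and "a \<le> b" "b \<le> c"
  shows "(LINT t:{a..}|lborel. g t)
    = (LINT t:{a..b}|lborel. g t) + (LINT t:{b..c}|lborel. g t) + (LINT t:{c..}|lborel. g t)"
proof -
  have int_sub: "set_integrable lborel A g" if "A \<in> sets lborel" "A \<subseteq> {a..}" for A
    using set_integrable_subset[OF int that] .
  have "AE t in lborel. \<not> (t \<in> {a..b} \<and> t \<in> {b..c})"
    using AE_lborel_singleton[of b] by eventually_elim auto
  then have "(LINT t:{a..b} \<union> {b..c}|lborel. g t) = (LINT t:{a..b}|lborel. g t) + (LINT t:{b..c}|lborel. g t)"
    using assms by (intro set_integral_Un_AE int_sub) auto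
  moreover have "AE t in lborel. \<not> (t \<in> {a..b} \<union> {b..c} \<and> t \<in> {c..})"
    using AE_lborel_singleton[of c] by eventually_elim (use assms in auto)
  then have "(LINT t:({a..b} \<union> {b..c}) \<union> {c..}|lborel. g t)
      = (LINT t:{a..b} \<union> {b..c}|lborel. g t) + (LINT t:{c..}|lborel. g t)"
    using assms by (intro set_integral_Un_AE int_sub) auto
  moreover have "({a..b} \<union> {b..c}) \<union> {c..} = {a..}"
    using assms by auto
  ultimately show ?thesis by simp
qed

lemma exists_pos_of_set_integral_pos:
  fixes f :: "real \<Rightarrow> real"
  assumes "0 < (LINT t:{0..}|lborel. f t)"
  shows "\<exists>a>0. 0 < f a"
proof (rule ccontr)
  assume "\<not> ?thesis"
  then have nonpos: "f t \<le> 0" if "0 < t" for t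
    using that by (meson not_less)
  have "AE t in lborel. 0 \<le> - (indicator {0..} t *\<^sub>R f t)"
    using AE_lborel_singleton[of 0]
    by eventually_elim (use nonpos in \<open>auto split: split_indicator\<close>)
  then have "0 \<le> (LINT t|lborel. - (indicator {0..} t *\<^sub>R f t))"
    by (rule integral_nonneg_AE)
  then have "(LINT t:{0..}|lborel. f t) \<le> 0"
    by (simp add: set_lebesgue_integral_def)
  with assms show False by simp
qed

lemma set_integrable_exists_below:
  fixes f :: "real \<Rightarrow> real"
  assumes int: "set_integrable lborel {0..} f" and nn: "\<forall>t\<ge>0. 0 \<le> f t"
    and "0 \<le> a" "0 < c"
  shows "\<exists>b>a. f b < c"
proof (rule ccontr)
  assume neg: "\<not> ?thesis"
  have ge: "c \<le> f t" if "a + 1 \<le> t" for t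
  proof -
    have "a < t" using that by simp
    then show ?thesis using neg by (meson not_less)
  qed
  define K where "K = (LINT t:{0..}|lborel. f t) / c + 1"
  have "0 \<le> (LINT t:{0..}|lborel. f t)"
    using nn by (intro set_integral_nonneg_real) simp
  then have "0 < K"
    using \<open>0 < c\<close> by (simp add: K_def add_nonneg_pos)
  have "(a + 1 + K - (a + 1)) * c \<le> (LINT t:{0..}|lborel. f t)"
    by (rule set_integral_ge_interval_mult[OF int]) (use \<open>0 < K\<close> \<open>0 \<le> a\<close> nn ge in auto)
  moreover have "(a + 1 + K - (a + 1)) * c = (LINT t:{0..}|lborel. f t) + c"
    using \<open>0 < c\<close> by (simp add: K_def field_simps)
  ultimately show False using \<open>0 < c\<close> by simp
qed

lemma log_concave_exp_decay:
  assumes lc: "log_concave_on_nonneg f" and diff: "\<forall>t>0. f differentiable (at t)"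
    and nn: "\<forall>t\<ge>0. 0 \<le> f t" and "0 \<le> a" "a < b" "0 < f b" "f b < f a"
  shows "\<exists>\<delta>>0. \<forall>t\<ge>0. f t \<le> f b * exp (- \<delta> * (t - b))"
proof (intro exI conjI allI impI)
  define \<delta> where "\<delta> = - (deriv f b / f b)"
  have "ln (f a) \<le> ln (f b) + deriv f b / f b * (a - b)"
    using log_concave_ln_le_tangent[OF lc diff, of b a] assms by simp
  also have "deriv f b / f b * (a - b) = \<delta> * (b - a)"
    by (simp add: \<delta>_def algebra_simps diff_divide_distrib)
  finally have "ln (f a) \<le> ln (f b) + \<delta> * (b - a)" .
  moreover have "ln (f b) < ln (f a)" using assms by simp
  ultimately have "0 < \<delta> * (b - a)" by linarith
  then show "0 < \<delta>" using assms by (simp add: zero_less_mult_iff)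
  show "f t \<le> f b * exp (- \<delta> * (t - b))" if "0 \<le> t" for t
    using log_concave_le_exp_tangent[OF lc diff, of b t] that nn assms by (simp add: \<delta>_def)
qed

lemma log_concave_moment_tendsto_0:
  assumes lc: "log_concave_on_nonneg f" and diff: "\<forall>t>0. f differentiable (at t)"
    and nn: "\<forall>t\<ge>0. 0 \<le> f t" and "0 \<le> a" "a < b" "f b < f a"
  shows "((\<lambda>t. t ^ m * f t) \<longlongrightarrow> 0) at_top"
proof (cases "f b = 0")
  case True
  have "f t = 0" if "b \<le> t" for t
  proof (rule ccontr)
    assume "f t \<noteq> 0"
    then have "0 < f t" using nn that assms by (simp add: less_le)
    then have "0 < f b"
      using assms that True by (intro log_concave_pos_between[OF lc, of a b t]) auto
    with True show False by simp
  qed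
  then have "eventually (\<lambda>t. t ^ m * f t = 0) at_top"
    by (auto simp: eventually_at_top_linorder)
  then show ?thesis by (rule tendsto_eventually)
next
  case False
  then have "0 < f b" using nn assms by (simp add: less_le)
  then obtain \<delta> where "0 < \<delta>" and decay: "\<And>t. 0 \<le> t \<Longrightarrow> f t \<le> f b * exp (- \<delta> * (t - b))"
    using log_concave_exp_decay[OF lc diff nn] assms by blast
  define C where "C = f b * exp (\<delta> * b) / \<delta> ^ m"
  have bound: "t ^ m * f t \<le> C * ((\<delta> * t) ^ m / exp (\<delta> * t))" if "0 \<le> t" for t
  proof -
    have "t ^ m * f t \<le> t ^ m * (f b * exp (- \<delta> * (t - b)))"
      using that decay by (intro mult_left_mono) auto
    also have "\<dots> = C * ((\<delta> * t) ^ m / exp (\<delta> * t))"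
      using \<open>0 < \<delta>\<close> by (simp add: C_def exp_diff algebra_simps)
    finally show ?thesis .
  qed
  have "filterlim (\<lambda>t. \<delta> * t) at_top at_top"
    using \<open>0 < \<delta>\<close> by (intro filterlim_tendsto_pos_mult_at_top[OF tendsto_const] filterlim_ident)
  from filterlim_compose[OF tendsto_power_div_exp_0 this]
  have lim: "((\<lambda>t. C * ((\<delta> * t) ^ m / exp (\<delta> * t))) \<longlongrightarrow> 0) at_top"
    by (rule tendsto_mult_right_zero)
  have lower: "eventually (\<lambda>t. 0 \<le> t ^ m * f t) at_top"
    and upper: "eventually (\<lambda>t. t ^ m * f t \<le> C * ((\<delta> * t) ^ m / exp (\<delta> * t))) at_top"
    using nn bound by (auto simp: eventually_at_top_linorder intro!: exI[of _ 0])
  show ?thesis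
    by (rule tendsto_sandwich[OF lower upper tendsto_const lim])
qed

lemma continuous_on_atLeast_attains_sup:
  fixes g :: "real \<Rightarrow> real"
  assumes cont: "continuous_on {a..} g" and "a \<le> b" and small: "eventually (\<lambda>t. g t < g b) at_top"
  shows "\<exists>t0\<ge>a. \<forall>t\<ge>a. g t \<le> g t0"
proof -
  obtain R where R: "\<And>t. R \<le> t \<Longrightarrow> g t < g b"
    using small by (auto simp: eventually_at_top_linorder)
  have "continuous_on {a..max R b} g" "{a..max R b} \<noteq> {}"
    using continuous_on_subset[OF cont] \<open>a \<le> b\<close> by auto
  then obtain t0 where t0: "t0 \<in> {a..max R b}" "\<forall>t\<in>{a..max R b}. g t \<le> g t0"
    using continuous_attains_sup[OF compact_Icc] by blast
  have "g t \<le> g t0" if "a \<le> t" for t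
  proof (cases "t \<le> max R b")
    case False
    then have "g t < g b" using R by simp
    also have "g b \<le> g t0" using t0 \<open>a \<le> b\<close> by simp
    finally show ?thesis by simp
  qed (use t0 that in simp)
  then show ?thesis using t0 by auto
qed

lemma moment_max_imp_critical:
  assumes "0 < t0" "0 < f t0" and diff: "f differentiable (at t0)"
    and max: "\<And>t. 0 \<le> t \<Longrightarrow> t ^ m * f t \<le> t0 ^ m * f t0"
  shows "deriv f t0 / f t0 = - real m / t0"
proof -
  have "(f has_real_derivative deriv f t0) (at t0)"
    using diff by (simp add: DERIV_deriv_iff_real_differentiable)
  then have "((\<lambda>t. t ^ m * f t) has_real_derivative
      real m * t0 ^ (m - 1) * f t0 + t0 ^ m * deriv f t0) (at t0)"
    by (auto intro!: derivative_eq_intros)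
  then have "real m * t0 ^ (m - 1) * f t0 + t0 ^ m * deriv f t0 = 0"
    by (rule DERIV_local_max[OF _ \<open>0 < t0\<close>]) (auto intro!: max simp: abs_less_iff)
  then have "0 = t0 * (real m * t0 ^ (m - 1) * f t0 + t0 ^ m * deriv f t0)"
    by simp
  also have "\<dots> = real m * (t0 * t0 ^ (m - 1)) * f t0 + t0 ^ m * t0 * deriv f t0"
    by (simp add: algebra_simps)
  also have "real m * (t0 * t0 ^ (m - 1)) = real m * t0 ^ m"
    by (cases m) auto
  finally have "t0 ^ m * (real m * f t0 + t0 * deriv f t0) = 0"
    by (simp add: algebra_simps)
  then have "real m * f t0 + t0 * deriv f t0 = 0"
    using \<open>0 < t0\<close> by simp
  then show ?thesis
    using assms by (simp add: field_simps)
qed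

lemma moment_critical_point_exists:
  fixes f :: "real \<Rightarrow> real"
  assumes "1 \<le> m" and cont: "continuous_on {0..} f" and nn: "\<forall>t\<ge>0. 0 \<le> f t"
    and lc: "log_concave_on_nonneg f" and diff: "\<forall>t>0. f differentiable (at t)"
    and int: "set_integrable lborel {0..} f" and pos: "0 < (LINT t:{0..}|lborel. f t)"
  shows "\<exists>t0>0. 0 < f t0 \<and> deriv f t0 / f t0 = - real m / t0"
proof -
  define h where "h t = t ^ m * f t" for t
  obtain a where a: "0 < a" "0 < f a"
    using exists_pos_of_set_integral_pos[OF pos] by blast
  obtain b where b: "a < b" "f b < f a"
    using set_integrable_exists_below[OF int nn, of a "f a"] a by auto
  have "(h \<longlongrightarrow> 0) at_top"
    unfolding h_def using a b by (intro log_concave_moment_tendsto_0[OF lc diff nn]) auto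
  then have "eventually (\<lambda>t. h t < h a) at_top"
    by (rule order_tendstoD(2)) (use a in \<open>simp add: h_def\<close>)
  moreover have "continuous_on {0..} h"
    unfolding h_def by (intro continuous_intros cont)
  ultimately obtain t0 where t0: "0 \<le> t0" "\<And>t. 0 \<le> t \<Longrightarrow> h t \<le> h t0"
    using continuous_on_atLeast_attains_sup[of 0 h a] a by auto
  have "0 < h a"
    using a by (simp add: h_def)
  also have "\<dots> \<le> h t0"
    using t0(2)[of a] a by simp
  finally have "0 < h t0" .
  then have "t0 \<noteq> 0" "f t0 \<noteq> 0"
    using \<open>1 \<le> m\<close> by (auto simp: h_def zero_power)
  then have "0 < t0" "0 < f t0"
    using t0(1) nn by (auto simp: less_le)
  then show ?thesis
    using moment_max_imp_critical[of t0 f m] diff t0(2) by (auto simp: h_def)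
qed

lemma tp_critical:
  fixes f :: "real \<Rightarrow> real"
  assumes n: "2 \<le> n" and cont: "continuous_on {0..} f" and nn: "\<forall>t\<ge>0. 0 \<le> f t"
    and lc: "log_concave_on_nonneg f" and diff: "\<forall>t>0. f differentiable (at t)"
    and int: "set_integrable lborel {0..} f" and pos: "0 < (LINT t:{0..}|lborel. f t)"
  shows "0 < tp (real n) f" "0 < f (tp (real n) f)"
    "deriv f (tp (real n) f) / f (tp (real n) f) = - real (n - 1) / tp (real n) f"
proof -
  let ?P = "\<lambda>t. 0 < t \<and> 0 < f t \<and> deriv f t / f t = - (real n - 1) / t"
  have "real (n - 1) = real n - 1"
    using n by simp
  moreover have "\<exists>t. ?P t"
    using moment_critical_point_exists[of "n - 1", OF _ cont nn lc diff int pos] n calculation by auto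
  moreover have "s \<le> t" if "?P s" "?P t" for s t
  proof (rule ccontr)
    assume "\<not> s \<le> t"
    then have "deriv f s / f s \<le> deriv f t / f t"
      using that by (intro log_concave_deriv_ratio_antimono[OF lc diff]) auto
    moreover have "(real n - 1) / s < (real n - 1) / t"
      using that n \<open>\<not> s \<le> t\<close> by (intro divide_strict_left_mono) auto
    moreover have "deriv f s / f s = - ((real n - 1) / s)" "deriv f t / f t = - ((real n - 1) / t)"
      using that by (simp_all add: minus_divide_left)
    ultimately show False
      by linarith
  qed
  ultimately have "\<exists>!t. ?P t"
    by (meson order_antisym)
  then have "?P (THE t. ?P t)"
    by (rule theI')
  then show "0 < tp (real n) f" "0 < f (tp (real n) f)"
    "deriv f (tp (real n) f) / f (tp (real n) f) = - real (n - 1) / tp (real n) f"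
    unfolding tp_def using \<open>real (n - 1) = real n - 1\<close> by auto
qed

lemma moment_le_exp_from_critical:
  assumes lc: "log_concave_on_nonneg f" and diff: "\<forall>t>0. f differentiable (at t)"
    and nn: "\<forall>t\<ge>0. 0 \<le> f t"
    and t0: "0 < t0" "0 < f t0" "deriv f t0 / f t0 = - real m / t0"
    and s: "0 < s" and st: "t0 \<le> s \<and> s \<le> t \<or> 0 \<le> t \<and> t \<le> s \<and> s \<le> t0"
  shows "t ^ m * f t \<le> s ^ m * f s * exp ((real m / s - real m / t0) * (t - s))"
proof (cases "0 < f s")
  case True
  have t: "0 \<le> t" using st t0 by auto
  have "(real m / s + deriv f s / f s) * (t - s) \<le> (real m / s - real m / t0) * (t - s)"
    using st
  proof
    assume "t0 \<le> s \<and> s \<le> t"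
    moreover have "deriv f s / f s \<le> - real m / t0"
      using log_concave_deriv_ratio_antimono[OF lc diff, of t0 s] calculation t0 True by simp
    ultimately show ?thesis by (intro mult_right_mono) auto
  next
    assume "0 \<le> t \<and> t \<le> s \<and> s \<le> t0"
    moreover have "- real m / t0 \<le> deriv f s / f s"
      using log_concave_deriv_ratio_antimono[OF lc diff, of s t0] calculation s t0 True by simp
    ultimately show ?thesis by (intro mult_right_mono_neg) auto
  qed
  then show ?thesis
    using moment_le_exp_tangent[OF lc diff s True t, of m] nn s t True
    by (smt (verit) exp_le_cancel_iff mult_left_mono mult_pos_pos zero_less_power)
next
  case False
  have "f t = 0"
  proof (rule ccontr)
    assume "f t \<noteq> 0"
    moreover have "0 \<le> t" using st t0 by auto
    ultimately have "0 < f t" using nn by (simp add: less_le)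
    then have "0 < f s"
      using st t0 log_concave_pos_between[OF lc, of t0 s t] log_concave_pos_between[OF lc, of t s t0]
      by auto
    with False show False ..
  qed
  then show ?thesis using nn s by simp
qed

lemma moment_unimodal:
  assumes lc: "log_concave_on_nonneg f" and diff: "\<forall>t>0. f differentiable (at t)"
    and nn: "\<forall>t\<ge>0. 0 \<le> f t"
    and t0: "0 < t0" "0 < f t0" "deriv f t0 / f t0 = - real m / t0"
    and st: "t0 \<le> s \<and> s \<le> t \<or> 0 < t \<and> t \<le> s \<and> s \<le> t0"
  shows "t ^ m * f t \<le> s ^ m * f s"
proof -
  have s: "0 < s"
    using st t0 by auto
  have "(real m / s - real m / t0) * (t - s) \<le> 0"
    using st
  proof
    assume "t0 \<le> s \<and> s \<le> t"
    then show ?thesis using t0 by (intro mult_nonpos_nonneg) (auto intro: divide_left_mono)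
  next
    assume "0 < t \<and> t \<le> s \<and> s \<le> t0"
    then show ?thesis using s by (intro mult_nonneg_nonpos) (auto intro: divide_left_mono)
  qed
  moreover have "0 \<le> s ^ m * f s" using nn s by auto
  ultimately show ?thesis
    using moment_le_exp_from_critical[OF lc diff nn t0 s, of t] st
    by (smt (verit) exp_le_one_iff mult_left_le)
qed

lemma moment_mass_near_critical:
  assumes lc: "log_concave_on_nonneg f" and diff: "\<forall>t>0. f differentiable (at t)"
    and nn: "\<forall>t\<ge>0. 0 \<le> f t"
    and t0: "0 < t0" "0 < f t0" "deriv f t0 / f t0 = - real m / t0"
    and \<delta>: "0 < \<delta>" "2 * \<delta> \<le> t0" and s: "s = t0 - \<delta> \<or> s = t0 + \<delta>"
    and int: "set_integrable lborel {t0 - 2 * \<delta>..t0 + 2 * \<delta>} (\<lambda>t. t ^ m * f t)"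
  shows "\<delta> * (s ^ m * f s) \<le> (LINT t:{t0 - 2 * \<delta>..t0 + 2 * \<delta>}|lborel. t ^ m * f t)"
proof -
  have "0 < s" using s t0 \<delta> by auto
  have between: "s ^ m * f s \<le> u ^ m * f u" if "u \<in> {min s t0..max s t0}" for u
    using s
  proof
    assume "s = t0 - \<delta>"
    with that \<open>0 < s\<close> show ?thesis
      by (intro moment_unimodal[OF lc diff nn t0]) auto
  next
    assume "s = t0 + \<delta>"
    with that \<delta> show ?thesis
      by (intro moment_unimodal[OF lc diff nn t0]) auto
  qed
  have "(max s t0 - min s t0) * (s ^ m * f s)
      \<le> (LINT t:{t0 - 2 * \<delta>..t0 + 2 * \<delta>}|lborel. t ^ m * f t)"
  proof (rule set_integral_ge_interval_mult[OF int _ _ _ _ between])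
    show "{min s t0..max s t0} \<subseteq> {t0 - 2 * \<delta>..t0 + 2 * \<delta>}"
      using s \<delta> by auto
    show "0 \<le> t ^ m * f t" if "t \<in> {t0 - 2 * \<delta>..t0 + 2 * \<delta>}" for t
      using that \<delta> nn by simp
  qed auto
  moreover have "max s t0 - min s t0 = \<delta>"
    using s \<delta> by auto
  ultimately show ?thesis by simp
qed

lemma moment_upper_tail:
  assumes lc: "log_concave_on_nonneg f" and diff: "\<forall>t>0. f differentiable (at t)"
    and nn: "\<forall>t\<ge>0. 0 \<le> f t"
    and t0: "0 < t0" "0 < f t0" "deriv f t0 / f t0 = - real m / t0"
    and "0 < \<delta>" "0 < \<alpha>" and slope: "\<alpha> \<le> real m * \<delta> / (t0 * (t0 + \<delta>))"
    and int: "set_integrable lborel {t0 + 2 * \<delta>..} (\<lambda>t. t ^ m * f t)"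
  shows "(LINT t:{t0 + 2 * \<delta>..}|lborel. t ^ m * f t)
    \<le> (t0 + \<delta>) ^ m * f (t0 + \<delta>) * exp (- \<alpha> * \<delta>) / \<alpha>"
proof (rule set_integral_le_exp_decay_right[OF int \<open>0 < \<alpha>\<close>])
  fix t
  assume t: "t0 + 2 * \<delta> \<le> t"
  have "real m / (t0 + \<delta>) - real m / t0 = - (real m * \<delta> / (t0 * (t0 + \<delta>)))"
    using t0 \<open>0 < \<delta>\<close> by (simp add: field_simps)
  then have "(real m / (t0 + \<delta>) - real m / t0) * (t - (t0 + \<delta>)) \<le> - \<alpha> * (t - (t0 + \<delta>))"
    using slope t \<open>0 < \<delta>\<close> by (intro mult_right_mono) auto
  then have "(t0 + \<delta>) ^ m * f (t0 + \<delta>) * exp ((real m / (t0 + \<delta>) - real m / t0) * (t - (t0 + \<delta>)))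
      \<le> (t0 + \<delta>) ^ m * f (t0 + \<delta>) * exp (- \<alpha> * (t - (t0 + \<delta>)))"
    using nn t0 \<open>0 < \<delta>\<close> by (intro mult_left_mono) auto
  moreover have "t ^ m * f t
      \<le> (t0 + \<delta>) ^ m * f (t0 + \<delta>) * exp ((real m / (t0 + \<delta>) - real m / t0) * (t - (t0 + \<delta>)))"
    by (intro moment_le_exp_from_critical[OF lc diff nn t0]) (use t t0 \<open>0 < \<delta>\<close> in auto)
  ultimately have "t ^ m * f t \<le> (t0 + \<delta>) ^ m * f (t0 + \<delta>) * exp (- \<alpha> * (t - (t0 + \<delta>)))"
    by (rule order_trans[rotated])
  then show "t ^ m * f t \<le> (t0 + \<delta>) ^ m * f (t0 + \<delta>) * exp (- \<alpha> * \<delta>) * exp (- \<alpha> * (t - (t0 + 2 * \<delta>)))"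
    by (simp add: algebra_simps flip: exp_add)
qed

lemma moment_lower_tail:
  assumes lc: "log_concave_on_nonneg f" and diff: "\<forall>t>0. f differentiable (at t)"
    and nn: "\<forall>t\<ge>0. 0 \<le> f t"
    and t0: "0 < t0" "0 < f t0" "deriv f t0 / f t0 = - real m / t0"
    and \<delta>: "0 < \<delta>" "2 * \<delta> \<le> t0" and "0 < \<alpha>" and slope: "\<alpha> \<le> real m * \<delta> / (t0 * (t0 - \<delta>))"
    and int: "set_integrable lborel {0..t0 - 2 * \<delta>} (\<lambda>t. t ^ m * f t)"
  shows "(LINT t:{0..t0 - 2 * \<delta>}|lborel. t ^ m * f t)
    \<le> (t0 - \<delta>) ^ m * f (t0 - \<delta>) * exp (- \<alpha> * \<delta>) / \<alpha>"
proof (rule set_integral_le_exp_decay_left[OF int])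
  fix t
  assume t: "0 \<le> t" "t \<le> t0 - 2 * \<delta>"
  have "real m / (t0 - \<delta>) - real m / t0 = real m * \<delta> / (t0 * (t0 - \<delta>))"
    using t0 \<delta> by (simp add: field_simps)
  then have "(real m / (t0 - \<delta>) - real m / t0) * (t - (t0 - \<delta>)) \<le> \<alpha> * (t - (t0 - \<delta>))"
    using slope t \<delta> by (intro mult_right_mono_neg) auto
  then have "(t0 - \<delta>) ^ m * f (t0 - \<delta>) * exp ((real m / (t0 - \<delta>) - real m / t0) * (t - (t0 - \<delta>)))
      \<le> (t0 - \<delta>) ^ m * f (t0 - \<delta>) * exp (\<alpha> * (t - (t0 - \<delta>)))"
    using nn \<delta> by (intro mult_left_mono) auto
  moreover have "t ^ m * f t
      \<le> (t0 - \<delta>) ^ m * f (t0 - \<delta>) * exp ((real m / (t0 - \<delta>) - real m / t0) * (t - (t0 - \<delta>)))"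
    by (intro moment_le_exp_from_critical[OF lc diff nn t0]) (use t t0 \<delta> in auto)
  ultimately have "t ^ m * f t \<le> (t0 - \<delta>) ^ m * f (t0 - \<delta>) * exp (\<alpha> * (t - (t0 - \<delta>)))"
    by (rule order_trans[rotated])
  then show "t ^ m * f t \<le> (t0 - \<delta>) ^ m * f (t0 - \<delta>) * exp (- \<alpha> * \<delta>) * exp (\<alpha> * (t - (t0 - 2 * \<delta>)))"
    by (simp add: algebra_simps flip: exp_add)
qed (use \<delta> \<open>0 < \<alpha>\<close> nn in auto)

lemma critical_slope_lower_bounds:
  fixes t0 \<delta> c :: real
  assumes "0 < t0" "0 < \<delta>" "2 * \<delta> \<le> t0" "0 \<le> c"
  shows "2 * c * \<delta> / (3 * t0\<^sup>2) \<le> c * \<delta> / (t0 * (t0 + \<delta>))"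
    and "2 * c * \<delta> / (3 * t0\<^sup>2) \<le> c * \<delta> / (t0 * (t0 - \<delta>))"
proof -
  have eq: "2 * c * \<delta> / (3 * t0\<^sup>2) = c * \<delta> / (t0 * (3 / 2 * t0))"
    using assms by (simp add: field_simps power2_eq_square)
  show "2 * c * \<delta> / (3 * t0\<^sup>2) \<le> c * \<delta> / (t0 * (t0 + \<delta>))"
    unfolding eq using assms by (intro divide_left_mono mult_left_mono) auto
  show "2 * c * \<delta> / (3 * t0\<^sup>2) \<le> c * \<delta> / (t0 * (t0 - \<delta>))"
    unfolding eq using assms by (intro divide_left_mono mult_left_mono) auto
qed

lemma moment_tails_le_mass:
  assumes lc: "log_concave_on_nonneg f" and diff: "\<forall>t>0. f differentiable (at t)"
    and nn: "\<forall>t\<ge>0. 0 \<le> f t"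
    and t0: "0 < t0" "0 < f t0" "deriv f t0 / f t0 = - real m / t0"
    and \<delta>: "0 < \<delta>" "2 * \<delta> \<le> t0" and "0 < \<alpha>"
    and slope: "\<alpha> \<le> real m * \<delta> / (t0 * (t0 + \<delta>))" "\<alpha> \<le> real m * \<delta> / (t0 * (t0 - \<delta>))"
    and int: "set_integrable lborel {0..} (\<lambda>t. t ^ m * f t)"
  shows "(LINT t:{0..t0 - 2 * \<delta>}|lborel. t ^ m * f t) + (LINT t:{t0 + 2 * \<delta>..}|lborel. t ^ m * f t)
    \<le> 2 / (\<alpha> * \<delta>) * exp (- \<alpha> * \<delta>) * (LINT t:{t0 - 2 * \<delta>..t0 + 2 * \<delta>}|lborel. t ^ m * f t)"
    (is "?Lo + ?Up \<le> _ * ?Mid")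
proof -
  have int_sub: "set_integrable lborel A (\<lambda>t. t ^ m * f t)" if "A \<subseteq> {0..}" "A \<in> sets lborel" for A
    using set_integrable_subset[OF int that(2,1)] .
  have near: "s ^ m * f s \<le> ?Mid / \<delta>" if "s = t0 - \<delta> \<or> s = t0 + \<delta>" for s
    using moment_mass_near_critical[OF lc diff nn t0 \<delta> that int_sub] \<delta> by (simp add: field_simps)
  have "?Up \<le> (t0 + \<delta>) ^ m * f (t0 + \<delta>) * exp (- \<alpha> * \<delta>) / \<alpha>"
    using \<delta> t0 by (intro moment_upper_tail[OF lc diff nn t0 \<delta>(1) \<open>0 < \<alpha>\<close> slope(1)] int_sub) auto
  also have "\<dots> \<le> ?Mid / \<delta> * exp (- \<alpha> * \<delta>) / \<alpha>"
    using near[of "t0 + \<delta>"] \<open>0 < \<alpha>\<close> by (intro divide_right_mono mult_right_mono) auto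
  finally have up: "?Up \<le> ?Mid / \<delta> * exp (- \<alpha> * \<delta>) / \<alpha>" .
  have "?Lo \<le> (t0 - \<delta>) ^ m * f (t0 - \<delta>) * exp (- \<alpha> * \<delta>) / \<alpha>"
    using \<delta> by (intro moment_lower_tail[OF lc diff nn t0 \<delta> \<open>0 < \<alpha>\<close> slope(2)] int_sub) auto
  also have "\<dots> \<le> ?Mid / \<delta> * exp (- \<alpha> * \<delta>) / \<alpha>"
    using near[of "t0 - \<delta>"] \<open>0 < \<alpha>\<close> by (intro divide_right_mono mult_right_mono) auto
  finally show ?thesis
    using up by (simp add: field_simps)
qed

lemma moment_concentration_at_critical:
  fixes f :: "real \<Rightarrow> real" and m :: nat
  assumes lc: "log_concave_on_nonneg f" and diff: "\<forall>t>0. f differentiable (at t)"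
    and nn: "\<forall>t\<ge>0. 0 \<le> f t"
    and t0: "0 < t0" "0 < f t0" "deriv f t0 / f t0 = - real m / t0"
    and \<epsilon>: "0 < \<epsilon>" "\<epsilon> \<le> 1" and large: "12 \<le> real m * \<epsilon>\<^sup>2"
    and int: "set_integrable lborel {0..} (\<lambda>t. t ^ m * f t)"
  shows "(1 - exp (- (real m * \<epsilon>\<^sup>2) / 6)) * (LINT t:{0..}|lborel. t ^ m * f t)
    \<le> (LINT t:{t0 * (1 - \<epsilon>)..t0 * (1 + \<epsilon>)}|lborel. t ^ m * f t)"
proof -
  define x where "x = real m * \<epsilon>\<^sup>2"
  define y where "y = exp (- x / 6)"
  define \<delta> where "\<delta> = t0 * \<epsilon> / 2"
  define \<alpha> where "\<alpha> = 2 * real m * \<delta> / (3 * t0\<^sup>2)"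
  define Lo where "Lo = (LINT t:{0..t0 - 2 * \<delta>}|lborel. t ^ m * f t)"
  define Mid where "Mid = (LINT t:{t0 - 2 * \<delta>..t0 + 2 * \<delta>}|lborel. t ^ m * f t)"
  define Up where "Up = (LINT t:{t0 + 2 * \<delta>..}|lborel. t ^ m * f t)"
  have \<delta>: "0 < \<delta>" "2 * \<delta> \<le> t0"
    using t0 \<epsilon> by (auto simp: \<delta>_def)
  have x: "12 \<le> x" "0 < real m"
    using large by (auto simp: x_def intro!: Nat.gr0I)
  have "0 < \<alpha>" and x_eq: "x = 6 * (\<alpha> * \<delta>)"
    using t0 \<epsilon> x by (auto simp: \<alpha>_def \<delta>_def x_def field_simps power2_eq_square)
  have "0 \<le> Mid"
    unfolding Mid_def using \<delta> nn by (intro set_integral_nonneg_real) auto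
  have "Lo + Up \<le> 2 / (\<alpha> * \<delta>) * exp (- \<alpha> * \<delta>) * Mid"
    unfolding Lo_def Up_def Mid_def using critical_slope_lower_bounds[OF t0(1) \<delta>, of "real m"]
    by (intro moment_tails_le_mass[OF lc diff nn t0 \<delta> \<open>0 < \<alpha>\<close> _ _ int]) (simp_all add: \<alpha>_def)
  also have "\<dots> = 12 / x * y * Mid"
    using \<open>0 < \<alpha>\<close> \<delta> unfolding y_def x_eq by (simp add: field_simps)
  also have "\<dots> \<le> y * Mid"
    using \<open>0 \<le> Mid\<close> x by (intro mult_right_mono mult_left_le_one_le) (auto simp: y_def)
  finally have "(1 - y) * (Lo + Mid + Up) \<le> (1 - y) * ((1 + y) * Mid)"
    using x by (intro mult_left_mono) (auto simp: y_def algebra_simps)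
  also have "\<dots> = Mid - y\<^sup>2 * Mid"
    by (simp add: algebra_simps power2_eq_square)
  also have "\<dots> \<le> Mid"
    using \<open>0 \<le> Mid\<close> by simp
  finally have "(1 - y) * (Lo + Mid + Up) \<le> Mid" .
  moreover have "(LINT t:{0..}|lborel. t ^ m * f t) = Lo + Mid + Up"
    unfolding Lo_def Mid_def Up_def using \<delta> by (intro set_integral_atLeast_split3 int) auto
  moreover have "t0 * (1 - \<epsilon>) = t0 - 2 * \<delta>" "t0 * (1 + \<epsilon>) = t0 + 2 * \<delta>"
    by (simp_all add: \<delta>_def algebra_simps)
  ultimately show ?thesis
    by (simp only: Mid_def[symmetric] y_def[symmetric] x_def[symmetric])
qed

lemma exp_rate_comparison:
  fixes \<epsilon> :: real
  assumes "2 \<le> n"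
  shows "exp (- (real (n - 1) * \<epsilon>\<^sup>2) / 6) \<le> 3 * exp (- (1 / 24) * \<epsilon>\<^sup>2 * real n)"
    and "real (n - 1) * \<epsilon>\<^sup>2 < 12 \<Longrightarrow> 1 \<le> 3 * exp (- (1 / 24) * \<epsilon>\<^sup>2 * real n)"
proof -
  have "real n \<le> 2 * real (n - 1)"
    using assms by (simp add: of_nat_diff)
  then have "\<epsilon>\<^sup>2 * real n \<le> \<epsilon>\<^sup>2 * (2 * real (n - 1))"
    by (intro mult_left_mono) auto
  then have rate: "(1 / 24) * \<epsilon>\<^sup>2 * real n \<le> real (n - 1) * \<epsilon>\<^sup>2 / 12"
    by (simp add: algebra_simps)
  moreover have "0 \<le> real (n - 1) * \<epsilon>\<^sup>2"
    by simp
  ultimately have "- (real (n - 1) * \<epsilon>\<^sup>2) / 6 \<le> - (1 / 24) * \<epsilon>\<^sup>2 * real n"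
    by linarith
  then have "exp (- (real (n - 1) * \<epsilon>\<^sup>2) / 6) \<le> exp (- (1 / 24) * \<epsilon>\<^sup>2 * real n)"
    by simp
  then show "exp (- (real (n - 1) * \<epsilon>\<^sup>2) / 6) \<le> 3 * exp (- (1 / 24) * \<epsilon>\<^sup>2 * real n)"
    using exp_ge_zero[of "- (1 / 24) * \<epsilon>\<^sup>2 * real n"] by linarith
  assume "real (n - 1) * \<epsilon>\<^sup>2 < 12"
  with rate have "- 1 \<le> - (1 / 24) * \<epsilon>\<^sup>2 * real n"
    by linarith
  then have "exp (- 1) \<le> exp (- (1 / 24) * \<epsilon>\<^sup>2 * real n)"
    by (rule exp_mono)
  moreover have "1 \<le> 3 * exp (- 1 :: real)"
    using exp_le by (simp add: exp_minus field_simps)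
  ultimately show "1 \<le> 3 * exp (- (1 / 24) * \<epsilon>\<^sup>2 * real n)"
    by linarith
qed

lemma tp_concentration:
  fixes f :: "real \<Rightarrow> real" and \<epsilon> :: real
  assumes n: "2 \<le> n" and cont: "continuous_on {0..} f" and nn: "\<forall>t\<ge>0. 0 \<le> f t"
    and lc: "log_concave_on_nonneg f" and diff: "\<forall>t>0. f differentiable (at t)"
    and int: "set_integrable lborel {0..} f" and pos: "0 < (LINT t:{0..}|lborel. f t)"
    and \<epsilon>: "0 \<le> \<epsilon>" "\<epsilon> \<le> 1"
  shows "(1 - 3 * exp (- (1 / 24) * \<epsilon>\<^sup>2 * real n)) * (LINT t:{0..}|lborel. t ^ (n - 1) * f t)
    \<le> (LINT t:{tp (real n) f * (1 - \<epsilon>)..tp (real n) f * (1 + \<epsilon>)}|lborel. t ^ (n - 1) * f t)"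
    (is "(1 - ?E) * ?Tot \<le> ?Mid")
proof -
  note t0 = tp_critical[OF n cont nn lc diff int pos]
  have "0 \<le> ?Tot"
    using nn by (intro set_integral_nonneg_real) simp
  have "0 \<le> ?Mid"
  proof (rule set_integral_nonneg_real)
    fix t
    assume "t \<in> {tp (real n) f * (1 - \<epsilon>)..tp (real n) f * (1 + \<epsilon>)}"
    moreover have "0 \<le> tp (real n) f * (1 - \<epsilon>)"
      using t0(1) \<epsilon> by simp
    ultimately show "0 \<le> t ^ (n - 1) * f t"
      using nn by simp
  qed
  consider "real (n - 1) * \<epsilon>\<^sup>2 < 12"
    | "\<not> set_integrable lborel {0..} (\<lambda>t. t ^ (n - 1) * f t)"
    | "12 \<le> real (n - 1) * \<epsilon>\<^sup>2" "set_integrable lborel {0..} (\<lambda>t. t ^ (n - 1) * f t)"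
    by linarith
  then show ?thesis
  proof cases
    case 1
    then have "(1 - ?E) * ?Tot \<le> 0"
      using exp_rate_comparison(2)[OF n] \<open>0 \<le> ?Tot\<close> by (simp add: mult_nonpos_nonneg)
    with \<open>0 \<le> ?Mid\<close> show ?thesis by linarith
  next
    case 2
    \<comment> \<open>The Bochner integral of a non-integrable function is 0.\<close>
    then have "?Tot = 0"
      by (simp add: set_lebesgue_integral_def set_integrable_def not_integrable_integral_eq)
    with \<open>0 \<le> ?Mid\<close> show ?thesis by simp
  next
    case 3
    then have "0 < \<epsilon>"
      using \<epsilon> by (cases "\<epsilon> = 0") auto
    have "(1 - exp (- (real (n - 1) * \<epsilon>\<^sup>2) / 6)) * ?Tot \<le> ?Mid"
      using moment_concentration_at_critical[OF lc diff nn t0 \<open>0 < \<epsilon>\<close> \<epsilon>(2) 3] .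
    moreover have "(1 - ?E) * ?Tot \<le> (1 - exp (- (real (n - 1) * \<epsilon>\<^sup>2) / 6)) * ?Tot"
      using exp_rate_comparison(1)[OF n] \<open>0 \<le> ?Tot\<close> by (intro mult_right_mono) auto
    ultimately show ?thesis by linarith
  qed
qed

theorem lemma4p5:
  shows "\<exists>C::real. \<exists>c::real. C > 1 \<and> 0 < c \<and> c < 1 \<and>
    (\<forall>(n::nat) (f::real \<Rightarrow> real) (\<epsilon>::real).
       n \<ge> 2 \<longrightarrow>
       continuous_on {0..} f \<longrightarrow>
       (\<forall>t\<ge>0. f t \<ge> 0) \<longrightarrow>
       log_concave_on_nonneg f \<longrightarrow>
       C2_on_pos f \<longrightarrow>
       set_integrable lborel {0..} f \<longrightarrow>
       0 < (LINT t:{0..}|lborel. f t) \<longrightarrow>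
       0 \<le> \<epsilon> \<longrightarrow> \<epsilon> \<le> 1 \<longrightarrow>
       (LINT t:{tp (real n) f * (1 - \<epsilon>) .. tp (real n) f * (1 + \<epsilon>)}|lborel. t ^ (n - 1) * f t)
         \<ge> (1 - C * exp (- c * \<epsilon>\<^sup>2 * real n)) * (LINT t:{0..}|lborel. t ^ (n - 1) * f t))"
proof (rule exI[of _ 3], rule exI[of _ "1 / 24"], intro conjI allI impI)
  fix n :: nat and f :: "real \<Rightarrow> real" and \<epsilon> :: real
  assume "2 \<le> n" "continuous_on {0..} f" "\<forall>t\<ge>0. 0 \<le> f t" "log_concave_on_nonneg f"
    "C2_on_pos f" "set_integrable lborel {0..} f" "0 < (LINT t:{0..}|lborel. f t)" "0 \<le> \<epsilon>" "\<epsilon> \<le> 1"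
  moreover from \<open>C2_on_pos f\<close> have "\<forall>t>0. f differentiable (at t)"
    unfolding C2_on_pos_def by blast
  ultimately show "(1 - 3 * exp (- (1 / 24) * \<epsilon>\<^sup>2 * real n)) * (LINT t:{0..}|lborel. t ^ (n - 1) * f t)
      \<le> (LINT t:{tp (real n) f * (1 - \<epsilon>)..tp (real n) f * (1 + \<epsilon>)}|lborel. t ^ (n - 1) * f t)"
    by (intro tp_concentration) auto
qed simp_all

end
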